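(* For every finite set $A$ of positive reals and every integer $\ell\ge0$, \[F_\ell(A;t)=\big(F_1(A;t)\big)^{\ell}\] as formal power series, where $F_\ell(A;t)=\sum_{n\ge0} r_\ell(\mathcal{C}_{n,A})\frac{t^n}{n!}$.
   Context: Let $A=\{a_1,\dots,a_m\}$ with $a_1>\dots>a_m>0$. For $n\ge1$, $\mathcal{C}_{n,A}$ is the arrangement in $\mathbb{R}^n$ of hyperplanes $x_i-x_j=0$ ($i<j$) and $x_i-x_j=a_k$ ($i\ne j$, $1\le k\le m$). Regions are connected components of the complement of the union of the hyperplanes. The level of $X\subseteq\mathbb{R}^n$ is the smallest integer $\ell\ge0$ such that there are a linear subspace $W$ of dimension $\ell$ and $r>0$ with $X\subseteq\{\bm x:\min_{\bm y\in W}\|\bm x-\bm y\|\le r\}$. $r_\ell(\mathcal{A})$ is the number of regions of $\mathcal{A}$ of level $\ell$. Convention: for $n=0$ there is exactly one region, of level $0$. *)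

theory Defs
  imports "HOL-Analysis.Analysis" "HOL-Library.Function_Algebras"
          "HOL-Computational_Algebra.Formal_Power_Series"
begin

text \<open>Points of R^n are represented as functions x :: nat => real with x i = 0 for i >= n
  (the carrier of the library topology Euclidean_space n); coordinates are indexed 0..n-1.\<close>

definition Rn :: "nat \<Rightarrow> (nat \<Rightarrow> real) set" where
  "Rn n = {x. \<forall>i\<ge>n. x i = 0}"

definition fscale :: "real \<Rightarrow> (nat \<Rightarrow> real) \<Rightarrow> (nat \<Rightarrow> real)" where
  "fscale c x = (\<lambda>i. c * x i)"

definition edist :: "nat \<Rightarrow> (nat \<Rightarrow> real) \<Rightarrow> (nat \<Rightarrow> real) \<Rightarrow> real" where
  "edist n x y = sqrt (\<Sum>i<n. (x i - y i)^2)"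

definition hyperplanes_C :: "nat \<Rightarrow> real set \<Rightarrow> (nat \<Rightarrow> real) set set" where
  "hyperplanes_C n A =
     {{x \<in> Rn n. x i - x j = 0} | i j. i < j \<and> j < n} \<union>
     {{x \<in> Rn n. x i - x j = a} | i j a. i < n \<and> j < n \<and> i \<noteq> j \<and> a \<in> A}"

definition regions_C :: "nat \<Rightarrow> real set \<Rightarrow> (nat \<Rightarrow> real) set set" where
  "regions_C n A =
     connected_components_of
       (subtopology (Euclidean_space n) (Rn n - \<Union>(hyperplanes_C n A)))"

definition within_level :: "nat \<Rightarrow> nat \<Rightarrow> (nat \<Rightarrow> real) set \<Rightarrow> bool" where
  "within_level n l X \<longleftrightarrow>
     (\<exists>W r. W \<subseteq> Rn n \<and> module.subspace fscale W \<and> vector_space.dim fscale W = l \<and> r > 0 \<and>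
        X \<subseteq> {x \<in> Rn n. \<exists>y\<in>W. edist n x y \<le> r})"

definition level :: "nat \<Rightarrow> (nat \<Rightarrow> real) set \<Rightarrow> nat" where
  "level n X = (LEAST l. within_level n l X)"

definition r_level :: "nat \<Rightarrow> nat \<Rightarrow> real set \<Rightarrow> nat" where
  "r_level l n A = card {R \<in> regions_C n A. level n R = l}"

definition F_gen :: "nat \<Rightarrow> real set \<Rightarrow> real fps" where
  "F_gen l A = Abs_fps (\<lambda>n. of_nat (r_level l n A) / fact n)"

end

theory Submission
  imports Defs
begin

text \<open>A point off all hyperplanes is described by its sign type, and the regions of
  \<open>\<C>\<^sub>n\<^sub>,\<^sub>A\<close> are exactly the sets of points with a common sign type: these sets are convex,
  and no connected set crosses a hyperplane. Sorting the coordinates of a point, a new block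
  starts whenever a coordinate exceeds all smaller ones by at least \<open>max A\<close>. Each block can be
  lifted independently without leaving the region, while inside a block the coordinates stay
  within bounded distance of each other; hence the level of a region is its number of blocks.
  Splitting off the top block is a bijection between regions with \<open>l\<close> blocks on the
  coordinates \<open>I\<close> and pairs of a one-block region on some \<open>T \<subseteq> I\<close> and an \<open>l - 1\<close>-block
  region on \<open>I - T\<close>. This binomial convolution says \<open>F\<^sub>l = F\<^sub>1 F\<^sub>l\<^sub>-\<^sub>1\<close>.\<close>

section \<open>Sign types of generic points\<close>

definition generic :: "real set \<Rightarrow> nat set \<Rightarrow> (nat \<Rightarrow> real) \<Rightarrow> bool" where
  "generic A I x \<longleftrightarrow> (\<forall>i\<in>I. \<forall>j\<in>I. i \<noteq> j \<longrightarrow> x i \<noteq> x j \<and> (\<forall>a\<in>A. x i - x j \<noteq> a))"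

definition sign_type :: "real set \<Rightarrow> nat set \<Rightarrow> (nat \<Rightarrow> real) \<Rightarrow> (nat \<times> nat \<times> real) set" where
  "sign_type A I x = {(i, j, a). i \<in> I \<and> j \<in> I \<and> a \<in> insert 0 A \<and> x i - x j < a}"

definition block_heads :: "real set \<Rightarrow> nat set \<Rightarrow> (nat \<Rightarrow> real) \<Rightarrow> nat set" where
  "block_heads A I x = {i \<in> I. \<forall>j\<in>I. x j < x i \<longrightarrow> (\<forall>a\<in>A. a \<le> x i - x j)}"

definition top_block :: "real set \<Rightarrow> nat set \<Rightarrow> (nat \<Rightarrow> real) \<Rightarrow> nat set" where
  "top_block A I x = {i \<in> I. \<forall>c\<in>block_heads A I x. x c \<le> x i}"

definition separated :: "real set \<Rightarrow> nat set \<Rightarrow> nat set \<Rightarrow> (nat \<Rightarrow> real) \<Rightarrow> bool" where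
  "separated A S T x \<longleftrightarrow> (\<forall>i\<in>T. \<forall>j\<in>S. \<forall>a\<in>insert 0 A. a < x i - x j)"

definition types_of_level :: "real set \<Rightarrow> nat \<Rightarrow> nat set \<Rightarrow> (nat \<times> nat \<times> real) set set" where
  "types_of_level A l I = {sign_type A I x | x. generic A I x \<and> card (block_heads A I x) = l}"

lemma generic_diff_neq:
  "generic A I x \<Longrightarrow> i \<in> I \<Longrightarrow> j \<in> I \<Longrightarrow> i \<noteq> j \<Longrightarrow> a \<in> insert 0 A \<Longrightarrow> x i - x j \<noteq> a"
  unfolding generic_def by force

lemma generic_subset: "generic A I x \<Longrightarrow> J \<subseteq> I \<Longrightarrow> generic A J x"
  unfolding generic_def by blast

lemma generic_translate: "\<forall>i\<in>I. y i = x i + c \<Longrightarrow> generic A I y \<longleftrightarrow> generic A I x"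
  unfolding generic_def by auto

lemma sign_type_translate: "\<forall>i\<in>I. y i = x i + c \<Longrightarrow> sign_type A I y = sign_type A I x"
  unfolding sign_type_def by auto

lemma block_heads_translate:
  "\<forall>i\<in>I. y i = x i + c \<Longrightarrow> block_heads A I y = block_heads A I x"
  unfolding block_heads_def by auto

lemma block_heads_subset: "block_heads A I x \<subseteq> I"
  unfolding block_heads_def by auto

lemma finite_block_heads: "finite I \<Longrightarrow> finite (block_heads A I x)"
  by (rule finite_subset[OF block_heads_subset])

lemma block_heads_restrict: "i \<in> block_heads A I x \<Longrightarrow> i \<in> J \<Longrightarrow> J \<subseteq> I \<Longrightarrow> i \<in> block_heads A J x"
  unfolding block_heads_def by auto

lemma lowest_in_block_heads: "i \<in> I \<Longrightarrow> \<forall>j\<in>I. x i \<le> x j \<Longrightarrow> i \<in> block_heads A I x"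
  unfolding block_heads_def by (auto simp: not_less[symmetric])

lemma ex_lowest:
  assumes "finite I" "I \<noteq> {}"
  shows "\<exists>i\<in>I. \<forall>j\<in>I. x i \<le> (x j :: 'b :: linorder)"
proof -
  have "Min (x ` I) \<in> x ` I" using assms by simp
  then obtain i where "i \<in> I" "x i = Min (x ` I)" by auto
  moreover have "\<forall>j\<in>I. Min (x ` I) \<le> x j" using assms by simp
  ultimately show ?thesis by (intro bexI[of _ i]) simp_all
qed

lemma ex_highest:
  assumes "finite I" "I \<noteq> {}"
  shows "\<exists>i\<in>I. \<forall>j\<in>I. x j \<le> (x i :: 'b :: linorder)"
proof -
  have "Max (x ` I) \<in> x ` I" using assms by simp
  then obtain i where "i \<in> I" "x i = Max (x ` I)" by auto
  moreover have "\<forall>j\<in>I. x j \<le> Max (x ` I)" using assms by simp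
  ultimately show ?thesis by (intro bexI[of _ i]) simp_all
qed

lemma insert_zero_le_sum:
  fixes A :: "real set"
  assumes "finite A" "\<forall>a\<in>A. a > 0" "a \<in> insert 0 A"
  shows "a \<le> \<Sum>A"
  using assms by (cases "a = 0") (auto intro!: member_le_sum sum_nonneg simp: less_imp_le)

lemma block_heads_nonempty: "finite I \<Longrightarrow> I \<noteq> {} \<Longrightarrow> block_heads A I x \<noteq> {}"
  by (metis empty_iff ex_lowest lowest_in_block_heads)

lemma finite_types_of_level: "finite A \<Longrightarrow> finite I \<Longrightarrow> finite (types_of_level A l I)"
  by (rule finite_subset[of _ "Pow (I \<times> I \<times> insert 0 A)"])
     (auto simp: types_of_level_def sign_type_def)

lemma types_of_level_0: "finite I \<Longrightarrow> types_of_level A 0 I = (if I = {} then {{}} else {})"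
  using block_heads_nonempty[of I A] finite_block_heads[of I A]
  by (auto simp: types_of_level_def sign_type_def generic_def block_heads_def)


definition relabel_type :: "(nat \<Rightarrow> nat) \<Rightarrow> (nat \<times> nat \<times> real) set \<Rightarrow> (nat \<times> nat \<times> real) set" where
  "relabel_type h \<tau> = (\<lambda>(i, j, a). (h i, h j, a)) ` \<tau>"

lemma generic_reindex:
  assumes "bij_betw h J K"
  shows "generic A J (y \<circ> h) \<longleftrightarrow> generic A K y"
proof -
  have "K = h ` J" "inj_on h J" using assms by (auto simp: bij_betw_def)
  then show ?thesis unfolding generic_def by (auto simp: inj_on_eq_iff)
qed

lemma sign_type_reindex:
  "bij_betw h J K \<Longrightarrow> sign_type A K y = relabel_type h (sign_type A J (y \<circ> h))"
  unfolding bij_betw_def sign_type_def relabel_type_def by (auto simp: image_iff; blast)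

lemma block_heads_reindex:
  assumes "bij_betw h J K"
  shows "block_heads A K y = h ` block_heads A J (y \<circ> h)"
proof -
  have K: "K = h ` J" using assms by (simp add: bij_betw_def)
  have heads: "h i \<in> block_heads A K y \<longleftrightarrow> i \<in> block_heads A J (y \<circ> h)" if "i \<in> J" for i
    using that unfolding K block_heads_def by auto
  show ?thesis
  proof (rule set_eqI)
    fix c
    show "c \<in> block_heads A K y \<longleftrightarrow> c \<in> h ` block_heads A J (y \<circ> h)"
      using heads block_heads_subset[of A K y] block_heads_subset[of A J "y \<circ> h"]
      unfolding K by auto
  qed
qed

lemma types_of_level_reindex:
  assumes h: "bij_betw h J K"
  shows "types_of_level A l K = relabel_type h ` types_of_level A l J"
proof
  show "types_of_level A l K \<subseteq> relabel_type h ` types_of_level A l J"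
  proof
    fix \<tau> assume "\<tau> \<in> types_of_level A l K"
    then obtain y where y: "\<tau> = sign_type A K y" "generic A K y" "card (block_heads A K y) = l"
      unfolding types_of_level_def by blast
    have "card (block_heads A J (y \<circ> h)) = l"
      using y(3) h block_heads_subset card_image
      by (metis bij_betw_def block_heads_reindex inj_on_subset)
    then have "sign_type A J (y \<circ> h) \<in> types_of_level A l J"
      using y(2) generic_reindex[OF h] unfolding types_of_level_def by blast
    then show "\<tau> \<in> relabel_type h ` types_of_level A l J"
      using y(1) sign_type_reindex[OF h] by blast
  qed
  show "relabel_type h ` types_of_level A l J \<subseteq> types_of_level A l K"
  proof
    fix \<tau> assume "\<tau> \<in> relabel_type h ` types_of_level A l J"
    then obtain x where x: "\<tau> = relabel_type h (sign_type A J x)" "generic A J x"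
      "card (block_heads A J x) = l"
      unfolding types_of_level_def by blast
    define y where "y = x \<circ> inv_into J h"
    have yh: "\<forall>i\<in>J. (y \<circ> h) i = x i + 0"
      using h by (simp add: y_def bij_betw_def)
    have "generic A J (y \<circ> h)" using generic_translate[OF yh] x(2) by (simp add: comp_def)
    then have "generic A K y" using generic_reindex[OF h] by simp
    moreover have "card (block_heads A K y) = l"
      using block_heads_reindex[OF h] block_heads_translate[OF yh] x(3) h block_heads_subset
      by (metis bij_betw_def card_image inj_on_subset)
    moreover have "\<tau> = sign_type A K y"
      using sign_type_reindex[OF h] sign_type_translate[OF yh] x(1) by (simp add: comp_def)
    ultimately show "\<tau> \<in> types_of_level A l K" unfolding types_of_level_def by blast
  qed
qed

lemma card_types_of_level_reindex:
  assumes "bij_betw h J K"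
  shows "card (types_of_level A l K) = card (types_of_level A l J)"
proof -
  have "inj_on (\<lambda>(i, j, a). (h i, h j, a)) (J \<times> J \<times> (UNIV :: real set))"
    using assms by (auto simp: bij_betw_def inj_on_def)
  then have "inj_on (relabel_type h) (Pow (J \<times> J \<times> UNIV))"
    unfolding relabel_type_def by (rule inj_on_image_Pow)
  moreover have "types_of_level A l J \<subseteq> Pow (J \<times> J \<times> UNIV)"
    by (auto simp: types_of_level_def sign_type_def)
  ultimately show ?thesis
    using types_of_level_reindex[OF assms] by (metis card_image inj_on_subset)
qed

lemma card_types_of_level_standard:
  "finite J \<Longrightarrow> card (types_of_level A l J) = card (types_of_level A l {..<card J})"
  by (metis atLeast0LessThan card_types_of_level_reindex ex_bij_betw_nat_finite)


lemma sign_type_separated: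
  assumes A: "\<forall>a\<in>A. a > 0" and sep: "separated A S T x"
  shows "sign_type A (T \<union> S) x = sign_type A T x \<union> sign_type A S x \<union> S \<times> T \<times> insert 0 A"
proof -
  have below: "x i - x j < a" if "i \<in> S" "j \<in> T" "a \<in> insert 0 A" for i j a
  proof -
    have "0 < x j - x i" using sep that unfolding separated_def by blast
    moreover have "0 \<le> a" using A that by force
    ultimately show ?thesis by linarith
  qed
  have above: "\<not> x i - x j < a" if "i \<in> T" "j \<in> S" "a \<in> insert 0 A" for i j a
    using sep that unfolding separated_def by force
  show ?thesis
  proof (rule set_eqI, clarify)
    fix i j a
    show "(i, j, a) \<in> sign_type A (T \<union> S) x \<longleftrightarrow>
        (i, j, a) \<in> sign_type A T x \<union> sign_type A S x \<union> S \<times> T \<times> insert 0 A"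
      using below[of i j a] above[of i j a] unfolding sign_type_def by auto
  qed
qed

lemma generic_separated:
  assumes A: "\<forall>a\<in>A. a > 0" and sep: "separated A S T x"
  shows "generic A (T \<union> S) x \<longleftrightarrow> generic A T x \<and> generic A S x"
proof -
  have "x i \<noteq> x j \<and> (\<forall>a\<in>A. x i - x j \<noteq> a) \<and> x j \<noteq> x i \<and> (\<forall>a\<in>A. x j - x i \<noteq> a)"
    if "i \<in> T" "j \<in> S" for i j
  proof -
    have "\<forall>a\<in>insert 0 A. a < x i - x j" using sep that unfolding separated_def by blast
    moreover have "\<forall>a\<in>A. x j - x i < a" using A \<open>\<forall>a\<in>insert 0 A. a < x i - x j\<close> by force
    ultimately show ?thesis by force
  qed
  then show ?thesis unfolding generic_def by (auto 4 3)
qed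

lemma block_heads_separated:
  assumes sep: "separated A S T x"
  shows "block_heads A (T \<union> S) x = block_heads A T x \<union> block_heads A S x"
proof (rule set_eqI)
  fix c
  have "c \<in> block_heads A (T \<union> S) x \<longleftrightarrow> c \<in> block_heads A T x" if "c \<in> T"
  proof -
    have "\<forall>j\<in>S. x j < x c \<and> (\<forall>a\<in>A. a \<le> x c - x j)"
      using sep that unfolding separated_def by (fastforce intro: less_imp_le)
    then show ?thesis using that unfolding block_heads_def by auto
  qed
  moreover have "c \<in> block_heads A (T \<union> S) x \<longleftrightarrow> c \<in> block_heads A S x" if "c \<in> S"
  proof -
    have "\<forall>j\<in>T. \<not> x j < x c"
      using sep that unfolding separated_def by fastforce
    then show ?thesis using that unfolding block_heads_def by auto
  qed
  ultimately show "c \<in> block_heads A (T \<union> S) x \<longleftrightarrow> c \<in> block_heads A T x \<union> block_heads A S x"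
    using block_heads_subset[of A "T \<union> S" x] block_heads_subset[of A T x] block_heads_subset[of A S x]
    by auto
qed

lemma separated_above_head:
  assumes gen: "generic A I x" and b: "b \<in> block_heads A I x"
  shows "separated A {j \<in> I. x j < x b} {i \<in> I. x b \<le> x i} x"
  unfolding separated_def
proof (intro ballI)
  fix i j a assume i: "i \<in> {i \<in> I. x b \<le> x i}" and j: "j \<in> {j \<in> I. x j < x b}"
    and a: "a \<in> insert 0 A"
  show "a < x i - x j"
  proof (cases "a = 0")
    case False
    then have "a \<in> A" using a by simp
    then have "a \<le> x i - x j" using b i j unfolding block_heads_def by force
    moreover have "x i - x j \<noteq> a" using generic_diff_neq[OF gen] i j a by force
    ultimately show ?thesis by simp
  qed (use i j in simp)
qed

lemma top_block_eq:
  assumes "b \<in> block_heads A I x" "\<forall>c\<in>block_heads A I x. x c \<le> x b"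
  shows "top_block A I x = {i \<in> I. x b \<le> x i}"
  using assms unfolding top_block_def by force

lemma top_block_split:
  assumes fin: "finite I" "I \<noteq> {}" and gen: "generic A I x"
  defines "T \<equiv> top_block A I x"
  shows "separated A (I - T) T x"
    and "card (block_heads A T x) = 1"
    and "card (block_heads A (I - T) x) = card (block_heads A I x) - 1"
proof -
  have fB: "finite (block_heads A I x)" and neB: "block_heads A I x \<noteq> {}"
    using finite_block_heads block_heads_nonempty fin by auto
  obtain b where b: "b \<in> block_heads A I x" and top: "\<forall>c\<in>block_heads A I x. x c \<le> x b"
    using ex_highest[OF fB neB] by blast
  have bI: "b \<in> I" using b(1) block_heads_subset by blast
  have T: "T = {i \<in> I. x b \<le> x i}" unfolding T_def by (rule top_block_eq[OF b(1) top])
  moreover have "I - T = {j \<in> I. x j < x b}" unfolding T by auto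
  ultimately show sep: "separated A (I - T) T x" using separated_above_head[OF gen b(1)] by simp
  have "T \<union> (I - T) = I" using T by auto
  then have heads: "block_heads A I x = block_heads A T x \<union> block_heads A (I - T) x"
    using block_heads_separated[OF sep] by simp
  have "block_heads A T x = {b}"
  proof
    show "{b} \<subseteq> block_heads A T x"
      using block_heads_restrict[OF b(1)] T bI by auto
    show "block_heads A T x \<subseteq> {b}"
    proof
      fix c assume c: "c \<in> block_heads A T x"
      then have "c \<in> T" "x c = x b" using heads top T block_heads_subset[of A T x] by force+
      then show "c \<in> {b}" using gen bI T unfolding generic_def by auto
    qed
  qed
  then show "card (block_heads A T x) = 1" by simp
  have "block_heads A (I - T) x = block_heads A I x - {b}"
    using heads \<open>block_heads A T x = {b}\<close> block_heads_subset[of A "I - T" x] T bI by auto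
  then show "card (block_heads A (I - T) x) = card (block_heads A I x) - 1"
    using b(1) fB by simp
qed

lemma top_block_glue:
  assumes sep: "separated A S T x" and "finite T" and one: "card (block_heads A T x) = 1"
  shows "top_block A (T \<union> S) x = T"
proof -
  have "T \<noteq> {}" using one by (auto simp: block_heads_def)
  then obtain m where m: "m \<in> T" "\<forall>j\<in>T. x m \<le> x j"
    using ex_lowest[OF \<open>finite T\<close>] by blast
  have "block_heads A T x = {m}"
    using lowest_in_block_heads[OF m] one by (metis card_1_singletonE singletonD)
  then have heads: "block_heads A (T \<union> S) x = insert m (block_heads A S x)"
    using block_heads_separated[OF sep] by simp
  have "x j < x i" if "i \<in> T" "j \<in> S" for i j
    using sep that unfolding separated_def by fastforce
  then show ?thesis
    unfolding top_block_def heads using m block_heads_subset[of A S x]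
    by (force simp: not_le[symmetric])
qed

text \<open>Heads and top block recomputed from the sign type alone, so that splitting off the
  top block is a function on types.\<close>

definition type_heads :: "real set \<Rightarrow> nat set \<Rightarrow> (nat \<times> nat \<times> real) set \<Rightarrow> nat set" where
  "type_heads A I \<tau> = {i \<in> I. \<forall>j\<in>I. (j, i, 0) \<in> \<tau> \<longrightarrow> (\<forall>a\<in>A. (i, j, a) \<notin> \<tau>)}"

definition type_top_block :: "real set \<Rightarrow> nat set \<Rightarrow> (nat \<times> nat \<times> real) set \<Rightarrow> nat set" where
  "type_top_block A I \<tau> = {i \<in> I. \<forall>c\<in>type_heads A I \<tau>. (i, c, 0) \<notin> \<tau>}"

definition restrict_type :: "nat set \<Rightarrow> (nat \<times> nat \<times> real) set \<Rightarrow> (nat \<times> nat \<times> real) set" where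
  "restrict_type J \<tau> = {(i, j, a) \<in> \<tau>. i \<in> J \<and> j \<in> J}"

definition split_type :: "real set \<Rightarrow> nat set \<Rightarrow> (nat \<times> nat \<times> real) set \<Rightarrow>
    nat set \<times> (nat \<times> nat \<times> real) set \<times> (nat \<times> nat \<times> real) set" where
  "split_type A I \<tau> =
    (let T = type_top_block A I \<tau> in (T, restrict_type T \<tau>, restrict_type (I - T) \<tau>))"

lemma type_heads_sign_type: "type_heads A I (sign_type A I x) = block_heads A I x"
  unfolding type_heads_def block_heads_def sign_type_def by (auto simp: not_less)

lemma type_top_block_sign_type: "type_top_block A I (sign_type A I x) = top_block A I x"
  unfolding type_top_block_def top_block_def type_heads_sign_type
  using block_heads_subset[of A I x] by (auto simp: sign_type_def not_less)

lemma restrict_sign_type: "J \<subseteq> I \<Longrightarrow> restrict_type J (sign_type A I x) = sign_type A J x"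
  unfolding restrict_type_def sign_type_def by auto

lemma split_sign_type:
  "split_type A I (sign_type A I x) =
     (top_block A I x, sign_type A (top_block A I x) x, sign_type A (I - top_block A I x) x)"
  unfolding split_type_def type_top_block_sign_type Let_def
  by (simp add: restrict_sign_type top_block_def)

lemma sign_type_top_block_split:
  assumes A: "\<forall>a\<in>A. a > 0" and "finite I" "generic A I x"
  defines "T \<equiv> top_block A I x"
  shows "sign_type A I x = sign_type A T x \<union> sign_type A (I - T) x \<union> (I - T) \<times> T \<times> insert 0 A"
proof (cases "I = {}")
  case False
  have "T \<union> (I - T) = I" unfolding T_def top_block_def by auto
  then show ?thesis
    using sign_type_separated[OF A top_block_split(1)[OF assms(2) False assms(3)]] T_def by simp
qed (simp add: sign_type_def T_def top_block_def)

lemma split_type_inj: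
  assumes "\<forall>a\<in>A. a > 0" "finite I"
  shows "inj_on (split_type A I) (types_of_level A l I)"
proof (rule inj_onI)
  fix \<sigma> \<tau> assume "\<sigma> \<in> types_of_level A l I" "\<tau> \<in> types_of_level A l I"
    and eq: "split_type A I \<sigma> = split_type A I \<tau>"
  then obtain x y where xy: "\<sigma> = sign_type A I x" "generic A I x" "\<tau> = sign_type A I y" "generic A I y"
    unfolding types_of_level_def by blast
  have "top_block A I x = top_block A I y"
    "sign_type A (top_block A I x) x = sign_type A (top_block A I y) y"
    "sign_type A (I - top_block A I x) x = sign_type A (I - top_block A I y) y"
    using eq unfolding xy(1,3) split_sign_type by auto
  then show "\<sigma> = \<tau>"
    unfolding xy(1,3) sign_type_top_block_split[OF assms xy(2)]
      sign_type_top_block_split[OF assms xy(4)] by simp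
qed

lemma split_type_mem:
  assumes "finite I" "1 \<le> l" "\<tau> \<in> types_of_level A l I"
  shows "split_type A I \<tau> \<in> (SIGMA T:Pow I. types_of_level A 1 T \<times> types_of_level A (l - 1) (I - T))"
proof -
  obtain x where x: "\<tau> = sign_type A I x" "generic A I x" "card (block_heads A I x) = l"
    using assms(3) unfolding types_of_level_def by blast
  define T where "T = top_block A I x"
  have "I \<noteq> {}" using x(3) assms(2) by (auto simp: block_heads_def)
  note split = top_block_split[OF assms(1) this x(2), folded T_def]
  have "T \<subseteq> I" unfolding T_def top_block_def by auto
  moreover have "sign_type A T x \<in> types_of_level A 1 T"
    using split(2) generic_subset[OF x(2) \<open>T \<subseteq> I\<close>] unfolding types_of_level_def by blast
  moreover have "sign_type A (I - T) x \<in> types_of_level A (l - 1) (I - T)"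
    using split(3) x(3) generic_subset[OF x(2), of "I - T"] unfolding types_of_level_def by auto
  ultimately show ?thesis using x(1) split_sign_type[of A I x] unfolding T_def by simp
qed

lemma ex_separated_glue:
  assumes fA: "finite A" and A: "\<forall>a\<in>A. a > 0" and "finite T" "finite S" "T \<inter> S = {}"
  obtains x c where "\<forall>i\<in>T. x i = y i + c" "\<forall>i\<in>S. x i = z i + 0" "separated A S T x"
proof
  define c where "c = (\<Sum>i\<in>T. \<bar>y i\<bar>) + (\<Sum>i\<in>S. \<bar>z i\<bar>) + \<Sum>A + 1"
  define x where "x i = (if i \<in> T then y i + c else z i)" for i
  show "\<forall>i\<in>T. x i = y i + c" "\<forall>i\<in>S. x i = z i + 0"
    unfolding x_def using assms(5) by auto
  show "separated A S T x"
    unfolding separated_def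
  proof (intro ballI)
    fix i j a assume ij: "i \<in> T" "j \<in> S" and a: "a \<in> insert 0 A"
    have "a \<le> \<Sum>A" using insert_zero_le_sum[OF fA A a] .
    moreover have "\<bar>y i\<bar> \<le> (\<Sum>i\<in>T. \<bar>y i\<bar>)" "\<bar>z j\<bar> \<le> (\<Sum>i\<in>S. \<bar>z i\<bar>)"
      using ij assms(3,4) by (auto intro: member_le_sum)
    ultimately show "a < x i - x j" using ij assms(5) unfolding x_def c_def by auto
  qed
qed

lemma glue_types:
  assumes fA: "finite A" and A: "\<forall>a\<in>A. a > 0" and fI: "finite I" and l: "1 \<le> l"
    and T: "T \<subseteq> I" and \<sigma>: "\<sigma> \<in> types_of_level A 1 T" and \<rho>: "\<rho> \<in> types_of_level A (l - 1) (I - T)"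
  shows "(T, \<sigma>, \<rho>) \<in> split_type A I ` types_of_level A l I"
proof -
  define S where "S = I - T"
  have I: "I = T \<union> S" and fin: "finite T" "finite S" and disj: "T \<inter> S = {}"
    unfolding S_def using T fI by (auto dest: finite_subset)
  obtain y where y: "\<sigma> = sign_type A T y" "generic A T y" "card (block_heads A T y) = 1"
    using \<sigma> unfolding types_of_level_def by blast
  obtain z where z: "\<rho> = sign_type A S z" "generic A S z" "card (block_heads A S z) = l - 1"
    using \<rho> unfolding types_of_level_def S_def by blast
  obtain x c where xT: "\<forall>i\<in>T. x i = y i + c" and xS: "\<forall>i\<in>S. x i = z i + 0"
    and sep: "separated A S T x"
    using ex_separated_glue[OF fA A fin disj] by metis
  have gen: "generic A I x"
    unfolding I generic_separated[OF A sep]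
    using y(2) z(2) generic_translate[OF xT] generic_translate[OF xS] by simp
  have "block_heads A I x = block_heads A T y \<union> block_heads A S z"
    unfolding I block_heads_separated[OF sep]
    using block_heads_translate[OF xT] block_heads_translate[OF xS] by simp
  moreover have "block_heads A T y \<inter> block_heads A S z = {}"
    using block_heads_subset[of A T y] block_heads_subset[of A S z] disj by auto
  ultimately have "card (block_heads A I x) = l"
    using y(3) z(3) l fin finite_block_heads by (simp add: card_Un_disjoint)
  then have "sign_type A I x \<in> types_of_level A l I"
    using gen unfolding types_of_level_def by blast
  moreover have "top_block A I x = T"
    unfolding I using top_block_glue[OF sep fin(1)] y(3) block_heads_translate[OF xT] by simp
  ultimately show ?thesis
    using split_sign_type[of A I x] y(1) z(1) sign_type_translate[OF xT] sign_type_translate[OF xS]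
    unfolding S_def by (metis image_eqI)
qed

lemma card_types_of_level_rec:
  assumes fA: "finite A" and A: "\<forall>a\<in>A. a > 0" and fI: "finite I" and l: "1 \<le> l"
  shows "card (types_of_level A l I) =
    (\<Sum>T\<in>Pow I. card (types_of_level A 1 T) * card (types_of_level A (l - 1) (I - T)))"
proof -
  have "split_type A I ` types_of_level A l I =
      (SIGMA T:Pow I. types_of_level A 1 T \<times> types_of_level A (l - 1) (I - T))"
    using split_type_mem[OF fI l] glue_types[OF fA A fI l] by blast
  then have "card (types_of_level A l I) =
      card (SIGMA T:Pow I. types_of_level A 1 T \<times> types_of_level A (l - 1) (I - T))"
    using card_image[OF split_type_inj[OF A fI]] by metis
  also have "\<dots> = (\<Sum>T\<in>Pow I. card (types_of_level A 1 T \<times> types_of_level A (l - 1) (I - T)))"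
    using fI fA by (intro card_SigmaI) (auto intro!: finite_types_of_level dest: finite_subset)
  finally show ?thesis by (simp add: card_cartesian_product)
qed

lemma sum_Pow_card:
  fixes f :: "nat \<Rightarrow> 'a :: comm_semiring_1"
  assumes "finite I"
  shows "(\<Sum>T\<in>Pow I. f (card T)) = (\<Sum>k\<le>card I. of_nat (card I choose k) * f k)"
proof -
  have "(\<Sum>T\<in>Pow I. f (card T)) = (\<Sum>k\<le>card I. \<Sum>T\<in>{T \<in> Pow I. card T = k}. f (card T))"
    using assms by (intro sum.group[symmetric]) (auto intro: card_mono)
  also have "\<dots> = (\<Sum>k\<le>card I. of_nat (card I choose k) * f k)"
    using n_subsets[OF assms] by (intro sum.cong refl) (simp add: Pow_def)
  finally show ?thesis .
qed

lemma card_types_of_level_lessThan_rec: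
  assumes "finite A" "\<forall>a\<in>A. a > 0" "1 \<le> l"
  shows "card (types_of_level A l {..<n}) = (\<Sum>k\<le>n. (n choose k) *
    (card (types_of_level A 1 {..<k}) * card (types_of_level A (l - 1) {..<n - k})))"
proof -
  have "card (types_of_level A l {..<n}) = (\<Sum>T\<in>Pow {..<n}.
      card (types_of_level A 1 {..<card T}) * card (types_of_level A (l - 1) {..<n - card T}))"
    unfolding card_types_of_level_rec[OF assms(1,2) finite_lessThan assms(3)]
  proof (intro sum.cong refl)
    fix T assume "T \<in> Pow {..<n}"
    then have "finite T" "card ({..<n} - T) = n - card T"
      by (auto simp: card_Diff_subset finite_subset)
    then show "card (types_of_level A 1 T) * card (types_of_level A (l - 1) ({..<n} - T)) =
        card (types_of_level A 1 {..<card T}) * card (types_of_level A (l - 1) {..<n - card T})"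
      using card_types_of_level_standard by (metis finite_Diff finite_lessThan)
  qed
  also have "\<dots> = (\<Sum>k\<le>n. (n choose k) *
      (card (types_of_level A 1 {..<k}) * card (types_of_level A (l - 1) {..<n - k})))"
    using sum_Pow_card[of "{..<n}" "\<lambda>k. card (types_of_level A 1 {..<k}) *
        card (types_of_level A (l - 1) {..<n - k})"] by simp
  finally show ?thesis .
qed

section \<open>Regions are the cells of sign types\<close>

definition generic_points :: "nat \<Rightarrow> real set \<Rightarrow> (nat \<Rightarrow> real) set" where
  "generic_points n A = {x \<in> Rn n. generic A {..<n} x}"

definition cell :: "nat \<Rightarrow> real set \<Rightarrow> (nat \<times> nat \<times> real) set \<Rightarrow> (nat \<Rightarrow> real) set" where
  "cell n A \<tau> = {x \<in> generic_points n A. sign_type A {..<n} x = \<tau>}"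

definition generic_space :: "nat \<Rightarrow> real set \<Rightarrow> (nat \<Rightarrow> real) topology" where
  "generic_space n A = subtopology (Euclidean_space n) (generic_points n A)"

lemma mem_Union_hyperplanes_C:
  "x \<in> \<Union>(hyperplanes_C n A) \<longleftrightarrow> x \<in> Rn n \<and> \<not> generic A {..<n} x"
proof
  assume "x \<in> \<Union>(hyperplanes_C n A)"
  then show "x \<in> Rn n \<and> \<not> generic A {..<n} x"
    unfolding hyperplanes_C_def generic_def by fastforce
next
  assume "x \<in> Rn n \<and> \<not> generic A {..<n} x"
  then obtain i j where x: "x \<in> Rn n" and ij: "i < n" "j < n" "i \<noteq> j"
    and "x i = x j \<or> (\<exists>a\<in>A. x i - x j = a)"
    unfolding generic_def by auto
  then consider "x i = x j" | a where "a \<in> A" "x i - x j = a" by blast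
  then show "x \<in> \<Union>(hyperplanes_C n A)"
  proof cases
    case 1
    have "x \<in> {y \<in> Rn n. y (min i j) - y (max i j) = 0}" using x 1 by (auto simp: min_def max_def)
    moreover have "min i j < max i j" "max i j < n" using ij by auto
    ultimately show ?thesis unfolding hyperplanes_C_def by blast
  next
    case 2
    then show ?thesis using x ij unfolding hyperplanes_C_def by blast
  qed
qed

lemma Rn_diff_hyperplanes_C: "Rn n - \<Union>(hyperplanes_C n A) = generic_points n A"
  unfolding generic_points_def using mem_Union_hyperplanes_C by blast

lemma topspace_generic_space: "topspace (generic_space n A) = generic_points n A"
  by (auto simp: generic_space_def generic_points_def Rn_def topspace_Euclidean_space)

lemma continuous_map_coordinate_diff:
  "continuous_map (generic_space n A) euclideanreal (\<lambda>z. z i - z j)"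
  unfolding generic_space_def Euclidean_space_def
  by (intro continuous_map_from_subtopology continuous_map_diff continuous_map_product_projection)
     simp_all

lemma clopen_half_space:
  assumes "i < n" "j < n" "i \<noteq> j" "a \<in> insert 0 A"
  shows "openin (generic_space n A) {z \<in> generic_points n A. z i - z j < a}"
    and "closedin (generic_space n A) {z \<in> generic_points n A. z i - z j < a}"
proof -
  show "openin (generic_space n A) {z \<in> generic_points n A. z i - z j < a}"
    using openin_continuous_map_preimage[OF continuous_map_coordinate_diff, of "{..<a}"]
    by (simp add: topspace_generic_space)
  have "z i - z j \<noteq> a" if "z \<in> generic_points n A" for z
    using assms that unfolding generic_points_def generic_def by auto
  then have "{z \<in> generic_points n A. z i - z j < a} = {z \<in> generic_points n A. z i - z j \<le> a}"
    by force
  then show "closedin (generic_space n A) {z \<in> generic_points n A. z i - z j < a}"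
    using closedin_continuous_map_preimage[OF continuous_map_coordinate_diff, of "{..a}"]
    by (simp add: topspace_generic_space)
qed

lemma sgn_cell_eq:
  assumes "x \<in> cell n A \<tau>" "y \<in> cell n A \<tau>" "i < n" "j < n" "i \<noteq> j" "a \<in> insert 0 A"
  shows "sgn (y i - y j - a) = sgn (x i - x j - a)"
proof -
  have "x i - x j < a \<longleftrightarrow> y i - y j < a"
  proof -
    have "sign_type A {..<n} x = sign_type A {..<n} y" using assms(1,2) by (simp add: cell_def)
    then have "(i, j, a) \<in> sign_type A {..<n} x \<longleftrightarrow> (i, j, a) \<in> sign_type A {..<n} y" by simp
    then show ?thesis using assms(3,4,6) unfolding sign_type_def by simp
  qed
  moreover have "x i - x j \<noteq> a" "y i - y j \<noteq> a"
    using assms generic_diff_neq[of A "{..<n}"] by (auto simp: cell_def generic_points_def)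
  ultimately show ?thesis by (auto simp: sgn_if)
qed

lemma in_cell_if_sgn_eq:
  assumes x: "x \<in> cell n A \<tau>" and y: "y \<in> Rn n"
    and sgn: "\<And>i j a. i < n \<Longrightarrow> j < n \<Longrightarrow> i \<noteq> j \<Longrightarrow> a \<in> insert 0 A \<Longrightarrow>
      sgn (y i - y j - a) = sgn (x i - x j - a)"
  shows "y \<in> cell n A \<tau>"
proof -
  have side: "y i - y j \<noteq> a \<and> (y i - y j < a \<longleftrightarrow> x i - x j < a)"
    if "i < n" "j < n" "i \<noteq> j" "a \<in> insert 0 A" for i j a
  proof -
    have "x i - x j \<noteq> a"
      using x that generic_diff_neq[of A "{..<n}"] by (auto simp: cell_def generic_points_def)
    then show ?thesis using sgn[OF that] by (auto simp: sgn_if split: if_splits)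
  qed
  have "generic A {..<n} y"
    unfolding generic_def using side[of _ _ 0] side by fastforce
  moreover have "sign_type A {..<n} y = sign_type A {..<n} x"
    unfolding sign_type_def using side by (fastforce simp: less_imp_neq)
  ultimately show ?thesis using x y unfolding cell_def generic_points_def by simp
qed

lemma sgn_convex_combination:
  fixes p q t :: real
  assumes "sgn q = sgn p" "p \<noteq> 0" "0 \<le> t" "t \<le> 1"
  shows "sgn ((1 - t) * p + t * q) = sgn p"
proof (cases "p > 0")
  case True
  then have "q > 0" using assms(1) by (simp add: sgn_if split: if_splits)
  then have "(1 - t) * p + t * q > 0"
    using True assms(3,4) by (cases "t = 1") (auto intro!: add_pos_nonneg)
  then show ?thesis using True by simp
next
  case False
  then have "p < 0" "q < 0" using assms(1,2) by (auto simp: sgn_if split: if_splits)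
  then have "(1 - t) * p + t * q < 0"
    using assms(3,4) by (cases "t = 1") (auto intro!: add_neg_nonpos mult_pos_neg mult_nonneg_nonpos)
  then show ?thesis using \<open>p < 0\<close> by simp
qed

lemma cell_convex:
  assumes x: "x \<in> cell n A \<tau>" and y: "y \<in> cell n A \<tau>" and t: "0 \<le> t" "t \<le> 1"
  shows "(\<lambda>k. (1 - t) * x k + t * y k) \<in> cell n A \<tau>"
proof (rule in_cell_if_sgn_eq[OF x])
  show "(\<lambda>k. (1 - t) * x k + t * y k) \<in> Rn n"
    using x y unfolding cell_def generic_points_def Rn_def by simp
  fix i j a assume ij: "i < n" "j < n" "i \<noteq> j" "a \<in> insert 0 A"
  have "x i - x j - a \<noteq> 0"
    using x ij generic_diff_neq[of A "{..<n}"] by (auto simp: cell_def generic_points_def)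
  moreover have "(1 - t) * x i + t * y i - ((1 - t) * x j + t * y j) - a =
      (1 - t) * (x i - x j - a) + t * (y i - y j - a)"
    by (simp add: algebra_simps)
  ultimately show "sgn ((1 - t) * x i + t * y i - ((1 - t) * x j + t * y j) - a) = sgn (x i - x j - a)"
    using sgn_convex_combination[OF sgn_cell_eq[OF x y ij] _ t] by simp
qed

lemma connectedin_cell: "connectedin (generic_space n A) (cell n A \<tau>)"
proof (rule path_connectedin_imp_connectedin)
  show "path_connectedin (generic_space n A) (cell n A \<tau>)"
    unfolding path_connectedin
  proof (intro conjI ballI)
    show "cell n A \<tau> \<subseteq> topspace (generic_space n A)"
      by (auto simp: cell_def topspace_generic_space)
    fix x y assume x: "x \<in> cell n A \<tau>" and y: "y \<in> cell n A \<tau>"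
    define g where "g t k = (1 - t) * x k + t * y k" for t k
    have g: "g \<in> {0..1} \<rightarrow> cell n A \<tau>" unfolding g_def using cell_convex[OF x y] by auto
    have "continuous_map (subtopology euclideanreal {0..1}) (powertop_real UNIV) g"
      unfolding continuous_map_componentwise_UNIV g_def
      by (intro allI continuous_map_from_subtopology continuous_intros)
    moreover have "g ` {0..1} \<subseteq> generic_points n A \<inter> Rn n"
      using g by (auto simp: cell_def generic_points_def)
    ultimately have "pathin (generic_space n A) g"
      unfolding pathin_def generic_space_def Euclidean_space_def continuous_map_in_subtopology
      by (auto simp: Rn_def)
    moreover have "g 0 = x" "g 1 = y" unfolding g_def by auto
    ultimately show "\<exists>g. pathin (generic_space n A) g \<and> g \<in> {0..1} \<rightarrow> cell n A \<tau> \<and> g 0 = x \<and> g 1 = y"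
      using g by blast
  qed
qed

lemma connected_component_of_generic_point:
  assumes x: "x \<in> generic_points n A"
  shows "connected_component_of_set (generic_space n A) x = cell n A (sign_type A {..<n} x)"
proof
  have "x \<in> cell n A (sign_type A {..<n} x)" using x unfolding cell_def by simp
  then show "cell n A (sign_type A {..<n} x) \<subseteq> connected_component_of_set (generic_space n A) x"
    by (rule connected_component_of_maximal[OF connectedin_cell])
  show "connected_component_of_set (generic_space n A) x \<subseteq> cell n A (sign_type A {..<n} x)"
  proof
    fix y assume "y \<in> connected_component_of_set (generic_space n A) x"
    then obtain C where C: "connectedin (generic_space n A) C" "x \<in> C" "y \<in> C"
      unfolding connected_component_of_def by blast
    have y: "y \<in> generic_points n A"
      using C connectedin_subset_topspace topspace_generic_space by blast
    \<comment> \<open>the connected set \<open>C\<close> cannot be split by any of the clopen half spaces\<close>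
    have same_side: "y i - y j < a \<longleftrightarrow> x i - x j < a"
      if "i < n" "j < n" "i \<noteq> j" "a \<in> insert 0 A" for i j a
      using connectedin_clopen_cases[OF C(1) clopen_half_space(2,1)[OF that]] C(2,3) x y
      by (auto simp: disjnt_iff)
    have "sign_type A {..<n} y = sign_type A {..<n} x"
    proof (rule set_eqI, clarify)
      fix i j a
      show "(i, j, a) \<in> sign_type A {..<n} y \<longleftrightarrow> (i, j, a) \<in> sign_type A {..<n} x"
        using same_side[of i j a] by (cases "i = j") (auto simp: sign_type_def)
    qed
    then show "y \<in> cell n A (sign_type A {..<n} x)" using y unfolding cell_def by simp
  qed
qed

lemma regions_C_eq_cells:
  "regions_C n A = (\<lambda>x. cell n A (sign_type A {..<n} x)) ` generic_points n A"
  unfolding regions_C_def Rn_diff_hyperplanes_C generic_space_def[symmetric]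
    connected_components_of_def topspace_generic_space
  using connected_component_of_generic_point by (intro image_cong) auto

section \<open>The level of a cell is its number of blocks\<close>

interpretation V: vector_space fscale
  by unfold_locales (auto simp: fscale_def fun_eq_iff algebra_simps)

interpretation V_real: vector_space_pair fscale "scaleR :: real \<Rightarrow> real \<Rightarrow> real"
  by unfold_locales (auto simp: fscale_def fun_eq_iff algebra_simps)

lemma fscale_apply [simp]: "fscale c x k = c * x k"
  by (simp add: fscale_def)

lemma sum_fun_apply: "(\<Sum>s\<in>S. F s) k = (\<Sum>s\<in>S. F s k)"
  by (induction S rule: infinite_finite_induct) auto


lemma Rn_subspace: "V.subspace (Rn n)"
  unfolding V.subspace_def Rn_def by auto

lemma Rn_eq_sum_coordinates:
  assumes "z \<in> Rn n"
  shows "z = (\<Sum>k<n. fscale (z k) (indicator {k}))"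
proof
  fix j
  show "z j = (\<Sum>k<n. fscale (z k) (indicator {k})) j"
    using assms by (cases "j < n") (auto simp: sum_fun_apply Rn_def indicator_def)
qed

lemma Rn_subset_span: "Rn n \<subseteq> V.span ((\<lambda>k. indicator {k}) ` {..<n})"
proof
  fix z assume "z \<in> Rn n"
  moreover have "(\<Sum>k<n. fscale (z k) (indicator {k})) \<in> V.span ((\<lambda>k. indicator {k}) ` {..<n})"
    by (intro V.span_sum V.span_scale V.span_base imageI) simp
  ultimately show "z \<in> V.span ((\<lambda>k. indicator {k}) ` {..<n})"
    using Rn_eq_sum_coordinates by metis
qed

lemma card_independent_le_dim:
  assumes "W \<subseteq> Rn n" "V.subspace W" "G \<subseteq> W" "V.independent G"
  shows "card G \<le> V.dim W"
proof -
  obtain B where B: "B \<subseteq> W" "V.independent B" "W \<subseteq> V.span B" "card B = V.dim W"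
    by (rule V.basis_exists)
  have "finite B"
    using V.independent_span_bound[OF _ B(2)] B(1) assms(1) Rn_subset_span by blast
  then show ?thesis
    using V.independent_span_bound[OF _ assms(4)] B assms(3) by (metis subset_trans)
qed

lemma linear_functional_separating:
  assumes "V.subspace W" "v \<notin> W"
  obtains \<phi> where "Vector_Spaces.linear fscale scaleR \<phi>" "\<forall>w\<in>W. \<phi> w = 0" "\<phi> v = (1 :: real)"
proof -
  obtain B where B: "B \<subseteq> W" "V.independent B" "W \<subseteq> V.span B"
    by (rule V.basis_exists)
  then have span: "V.span B = W" using V.span_subspace assms(1) by blast
  then have "V.independent (insert v B)" using V.independent_insertI assms(2) B(2) by blast
  then obtain \<phi> where lin: "Vector_Spaces.linear fscale scaleR \<phi>"
    and \<phi>: "\<forall>u\<in>insert v B. \<phi> u = (if u = v then 1 else (0 :: real))"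
    using V_real.linear_independent_extend[of "insert v B" "\<lambda>u. if u = v then 1 else 0"] by blast
  have "\<phi> u = 0" if "u \<in> B" for u
    using \<phi> that B(1) assms(2) by auto
  then have "\<forall>w\<in>W. \<phi> w = 0"
    using V_real.linear_eq_0_on_span[OF lin] span by blast
  then show ?thesis using that lin \<phi> by simp
qed

lemma linear_diff_le_edist:
  assumes lin: "Vector_Spaces.linear fscale scaleR \<phi>" and "x \<in> Rn n" "y \<in> Rn n"
  shows "\<bar>\<phi> x - \<phi> y\<bar> \<le> (\<Sum>k<n. \<bar>\<phi> (indicator {k})\<bar>) * edist n x y"
proof -
  interpret L: Vector_Spaces.linear fscale "scaleR :: real \<Rightarrow> real \<Rightarrow> real" \<phi> by (rule lin)
  define z where "z = x - y"
  have z: "z \<in> Rn n" using assms(2,3) unfolding z_def Rn_def by simp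
  have zk: "\<bar>z k\<bar> \<le> edist n x y" if "k < n" for k
  proof -
    have "\<bar>z k\<bar> \<le> L2_set (\<lambda>k. \<bar>z k\<bar>) {..<n}" using that by (intro member_le_L2_set) auto
    then show ?thesis unfolding L2_set_def edist_def z_def by simp
  qed
  have "\<phi> x - \<phi> y = \<phi> z" unfolding z_def by (simp add: L.diff)
  also have "\<dots> = \<phi> (\<Sum>k<n. fscale (z k) (indicator {k}))"
    using arg_cong[OF Rn_eq_sum_coordinates[OF z], of \<phi>] .
  also have "\<dots> = (\<Sum>k<n. z k * \<phi> (indicator {k}))" by (simp add: L.sum L.scale)
  finally have "\<bar>\<phi> x - \<phi> y\<bar> \<le> (\<Sum>k<n. \<bar>z k\<bar> * \<bar>\<phi> (indicator {k})\<bar>)"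
    by (metis (no_types, lifting) abs_mult sum.cong sum_abs)
  also have "\<dots> \<le> (\<Sum>k<n. edist n x y * \<bar>\<phi> (indicator {k})\<bar>)"
    using zk by (intro sum_mono mult_right_mono) auto
  finally show ?thesis by (simp add: sum_distrib_left mult.commute)
qed


definition block :: "real set \<Rightarrow> nat set \<Rightarrow> (nat \<Rightarrow> real) \<Rightarrow> nat \<Rightarrow> nat set" where
  "block A I x b = {i \<in> I. x b \<le> x i \<and> (\<forall>c\<in>block_heads A I x. x b < x c \<longrightarrow> x i < x c)}"

lemma block_subset: "block A I x b \<subseteq> I"
  unfolding block_def by auto

lemma head_in_block: "b \<in> block_heads A I x \<Longrightarrow> b \<in> block A I x b"
  unfolding block_def using block_heads_subset by auto

lemma block_head_unique:
  assumes gen: "generic A I x" and b: "b \<in> block_heads A I x" and c: "c \<in> block_heads A I x"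
    and i: "i \<in> block A I x b" "i \<in> block A I x c"
  shows "b = c"
proof (rule ccontr)
  assume "b \<noteq> c"
  then have "x b \<noteq> x c" using gen b c block_heads_subset unfolding generic_def by blast
  then show False using i b c unfolding block_def by (auto simp: neq_iff)
qed

lemma ex_block:
  assumes "finite I" "i \<in> I"
  obtains b where "b \<in> block_heads A I x" "i \<in> block A I x b"
proof -
  define B where "B = {c \<in> block_heads A I x. x c \<le> x i}"
  \<comment> \<open>the highest head not above \<open>x\<^sub>i\<close>; it exists since the lowest point is a head\<close>
  have "finite B" unfolding B_def using finite_block_heads[OF assms(1)] by simp
  moreover obtain m where "m \<in> I" "\<forall>j\<in>I. x m \<le> x j" using ex_lowest assms by blast
  then have "m \<in> B" unfolding B_def using lowest_in_block_heads assms(2) by blast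
  ultimately obtain b where b: "b \<in> B" "\<forall>c\<in>B. x c \<le> x b" using ex_highest by blast
  then have "i \<in> block A I x b" using assms(2) unfolding B_def block_def by force
  then show ?thesis using that b(1) unfolding B_def by blast
qed

text \<open>Inside a block every point is reached from the head by steps shorter than some
  \<open>a \<in> A\<close>, so a block has bounded width.\<close>

lemma block_width_le:
  assumes D: "\<forall>a\<in>A. a \<le> D" "0 \<le> D" and fin: "finite I" and b: "b \<in> block_heads A I x"
  shows "i \<in> block A I x b \<Longrightarrow> x i - x b \<le> real (card {k \<in> I. x b \<le> x k \<and> x k < x i}) * D"
proof (induction "card {k \<in> I. x b \<le> x k \<and> x k < x i}" arbitrary: i rule: less_induct)
  case less
  let ?below = "\<lambda>i. {k \<in> I. x b \<le> x k \<and> x k < x i}"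
  have i: "i \<in> I" "x b \<le> x i" "\<And>c. c \<in> block_heads A I x \<Longrightarrow> x b < x c \<Longrightarrow> x i < x c"
    using less.prems unfolding block_def by auto
  show ?case
  proof (cases "x b < x i")
    case True
    have "b \<in> ?below i" using b True block_heads_subset by blast
    then have "0 < card (?below i)" using fin by (auto simp: card_gt_0_iff)
    then have one: "1 \<le> card (?below i)" by simp
    have "i \<notin> block_heads A I x" using i(3) True by blast
    then obtain j a where j: "j \<in> I" "x j < x i" "a \<in> A" "x i - x j < a"
      using i(1) unfolding block_heads_def by (auto simp: not_le)
    show ?thesis
    proof (cases "x j < x b")
      case True
      then have "x i - x b \<le> D" using j D by force
      also have "\<dots> \<le> real (card (?below i)) * D" using one D(2) by (simp add: mult_le_cancel_right1)
      finally show ?thesis .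
    next
      case False
      have "j \<in> block A I x b" using j False i unfolding block_def by force
      moreover have "?below j \<subseteq> ?below i" "j \<in> ?below i" "j \<notin> ?below j" using j False by auto
      then have "?below j \<subset> ?below i" by blast
      then have lt: "card (?below j) < card (?below i)" using fin by (intro psubset_card_mono) auto
      ultimately have "x j - x b \<le> real (card (?below j)) * D" using less.hyps by blast
      then have "x i - x b \<le> real (card (?below j) + 1) * D" using j D by (force simp: algebra_simps)
      also have "\<dots> \<le> real (card (?below i)) * D" using lt D(2) by (intro mult_right_mono) auto
      finally show ?thesis .
    qed
  qed (use i D in simp)
qed

lemma abs_block_width_le:
  assumes "\<forall>a\<in>A. a \<le> D" "0 \<le> D" "finite I" "b \<in> block_heads A I x" "i \<in> block A I x b"
  shows "\<bar>x i - x b\<bar> \<le> real (card I) * D"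
proof -
  have "x i - x b \<le> real (card {k \<in> I. x b \<le> x k \<and> x k < x i}) * D"
    using block_width_le assms by blast
  also have "\<dots> \<le> real (card I) * D"
    using assms(2,3) by (intro mult_right_mono) (auto intro: card_mono)
  finally show ?thesis using assms(5) unfolding block_def by auto
qed

lemma sign_type_less_iff: "i \<in> I \<Longrightarrow> j \<in> I \<Longrightarrow> (j, i, 0) \<in> sign_type A I x \<longleftrightarrow> x j < x i"
  unfolding sign_type_def by auto

lemma block_heads_eq_if_sign_type_eq:
  "sign_type A I y = sign_type A I x \<Longrightarrow> block_heads A I y = block_heads A I x"
  by (metis type_heads_sign_type)

lemma block_eq_if_sign_type_eq:
  assumes "sign_type A I y = sign_type A I x" "b \<in> I"
  shows "block A I y b = block A I x b"
proof -
  have "x j < x i \<longleftrightarrow> y j < y i" if "i \<in> I" "j \<in> I" for i j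
    using assms(1) sign_type_less_iff[OF that] by metis
  then show ?thesis
    using assms block_heads_subset[of A I x]
    unfolding block_def block_heads_eq_if_sign_type_eq[OF assms(1)]
    by (auto simp: not_less[symmetric]) (meson subsetD)+
qed

lemma indicator_block:
  assumes "generic A I x" "\<beta> \<in> block_heads A I x" "k \<in> block A I x \<beta>" "c \<in> block_heads A I x"
  shows "indicator (block A I x c) k = (if c = \<beta> then 1 else (0 :: real))"
  using block_head_unique[OF assms(1,4,2)] assms(3) by (auto simp: indicator_def)

lemma sum_indicator_block:
  assumes "generic A I x" "finite I" "B \<subseteq> block_heads A I x"
    and "\<beta> \<in> block_heads A I x" "k \<in> block A I x \<beta>"
  shows "(\<Sum>c\<in>B. f c * indicator (block A I x c) k) = (if \<beta> \<in> B then f \<beta> else (0 :: real))"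
proof -
  have "finite B" using assms(2,3) finite_block_heads finite_subset by blast
  moreover have "(\<Sum>c\<in>B. f c * indicator (block A I x c) k) = (\<Sum>c\<in>B. if c = \<beta> then f c else 0)"
    using indicator_block[OF assms(1,4,5)] assms(3) by (intro sum.cong) auto
  ultimately show ?thesis by simp
qed

lemma inj_on_indicator_block:
  assumes "generic A I x"
  shows "inj_on (\<lambda>b. indicator (block A I x b) :: nat \<Rightarrow> real) (block_heads A I x)"
proof (rule inj_onI)
  fix b c assume b: "b \<in> block_heads A I x" and c: "c \<in> block_heads A I x"
    and "indicator (block A I x b) = (indicator (block A I x c) :: nat \<Rightarrow> real)"
  then have "indicator (block A I x c) b = (1 :: real)"
    using head_in_block[OF b] by (metis indicator_simps(1))
  then show "b = c"
    using indicator_block[OF assms b head_in_block[OF b] c] by (simp split: if_splits)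
qed

lemma independent_indicator_block:
  assumes gen: "generic A I x" and fin: "finite I"
  shows "V.independent ((\<lambda>b. indicator (block A I x b)) ` block_heads A I x)"
proof (rule V.independent_if_scalars_zero)
  let ?G = "(\<lambda>b. indicator (block A I x b) :: nat \<Rightarrow> real) ` block_heads A I x"
  show fG: "finite ?G" using finite_block_heads[OF fin] by simp
  fix f w assume sum: "(\<Sum>v\<in>?G. fscale (f v) v) = 0" and "w \<in> ?G"
  then obtain b where b: "b \<in> block_heads A I x" "w = indicator (block A I x b)" by blast
  have "(\<Sum>v\<in>?G. fscale (f v) v) b = (\<Sum>c\<in>block_heads A I x. f (indicator (block A I x c)) *
      indicator (block A I x c) b)"
    by (simp add: sum_fun_apply sum.reindex[OF inj_on_indicator_block[OF gen]])
  also have "\<dots> = f w"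
    using sum_indicator_block[OF gen fin subset_refl b(1) head_in_block[OF b(1)]] b by simp
  finally show "f w = 0" using sum by simp
qed

lemma indicator_above_head_eq_sum:
  assumes gen: "generic A I x" and fin: "finite I" and b: "b \<in> block_heads A I x"
  shows "indicator {k \<in> I. x b \<le> x k} =
    (\<Sum>c\<in>{c \<in> block_heads A I x. x b \<le> x c}. indicator (block A I x c) :: nat \<Rightarrow> real)"
proof
  fix k
  show "indicator {k \<in> I. x b \<le> x k} k =
      (\<Sum>c\<in>{c \<in> block_heads A I x. x b \<le> x c}. indicator (block A I x c) :: nat \<Rightarrow> real) k"
  proof (cases "k \<in> I")
    case True
    then obtain \<beta> where \<beta>: "\<beta> \<in> block_heads A I x" "k \<in> block A I x \<beta>" using ex_block fin by blast
    \<comment> \<open>\<open>b\<close> lies below \<open>k\<close> iff it lies below the head of the block of \<open>k\<close>\<close>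
    have "x b \<le> x k \<longleftrightarrow> x b \<le> x \<beta>" using \<beta> b unfolding block_def by force
    then show ?thesis
      using sum_indicator_block[OF gen fin _ \<beta>, of _ "\<lambda>_. 1"] True \<beta>(1)
      by (simp add: sum_fun_apply)
  next
    case False
    then have "k \<notin> block A I x c" for c using block_subset by blast
    then show ?thesis using False by (simp add: sum_fun_apply)
  qed
qed


lemma upper_shift_in_cell:
  assumes A: "\<forall>a\<in>A. a > 0" and x: "x \<in> generic_points n A"
    and b: "b \<in> block_heads A {..<n} x" and t: "0 \<le> t"
  shows "(\<lambda>k. x k + t * indicator {k \<in> {..<n}. x b \<le> x k} k) \<in> cell n A (sign_type A {..<n} x)"
proof (rule in_cell_if_sgn_eq)
  have gen: "generic A {..<n} x" using x by (simp add: generic_points_def)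
  show "x \<in> cell n A (sign_type A {..<n} x)" using x by (simp add: cell_def)
  show "(\<lambda>k. x k + t * indicator {k \<in> {..<n}. x b \<le> x k} k) \<in> Rn n"
    using x by (auto simp: generic_points_def Rn_def)
  fix i j a assume ij: "i < n" "j < n" "i \<noteq> j" and a: "a \<in> insert 0 A"
  have sep: "a < x p - x q" if "p < n" "q < n" "x b \<le> x p" "x q < x b" for p q
    using separated_above_head[OF gen b] that a unfolding separated_def by auto
  have "0 \<le> a" using a A by force
  then show "sgn (x i + t * indicator {k \<in> {..<n}. x b \<le> x k} i -
      (x j + t * indicator {k \<in> {..<n}. x b \<le> x k} j) - a) = sgn (x i - x j - a)"
    using sep[of i j] sep[of j i] ij t by (auto simp: indicator_def sgn_if not_le)
qed

lemma edist_block_combination_le: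
  assumes D: "\<forall>a\<in>A. a \<le> D" "0 \<le> D" and z: "generic A {..<n} z"
  shows "edist n z (\<Sum>b\<in>block_heads A {..<n} z. fscale (z b) (indicator (block A {..<n} z b)))
    \<le> real n * (real n * D)"
proof -
  let ?I = "{..<n}"
  define y where "y = (\<Sum>b\<in>block_heads A ?I z. fscale (z b) (indicator (block A ?I z b)))"
  have bound: "\<bar>z k - y k\<bar> \<le> real n * D" if k: "k < n" for k
  proof -
    obtain \<beta> where \<beta>: "\<beta> \<in> block_heads A ?I z" "k \<in> block A ?I z \<beta>"
      using ex_block[of ?I k] k by blast
    have "y k = z \<beta>"
      using sum_indicator_block[OF z _ subset_refl \<beta>] \<beta>(1) by (simp add: y_def sum_fun_apply)
    then show ?thesis using abs_block_width_le[OF D _ \<beta>] by simp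
  qed
  have "edist n z y = L2_set (\<lambda>k. z k - y k) ?I" unfolding edist_def L2_set_def by simp
  also have "\<dots> \<le> (\<Sum>k<n. \<bar>z k - y k\<bar>)" by (rule L2_set_le_sum_abs)
  also have "\<dots> \<le> (\<Sum>k<n. real n * D)" using bound by (intro sum_mono) auto
  finally show ?thesis unfolding y_def by simp
qed

lemma within_level_card_block_heads:
  assumes fA: "finite A" and A: "\<forall>a\<in>A. a > 0" and x: "x \<in> generic_points n A"
  shows "within_level n (card (block_heads A {..<n} x)) (cell n A (sign_type A {..<n} x))"
proof -
  let ?I = "{..<n}" and ?B = "block_heads A {..<n} x"
  let ?e = "\<lambda>b. indicator (block A {..<n} x b) :: nat \<Rightarrow> real"
  define W where "W = V.span (?e ` ?B)"
  define r where "r = real n * (real n * \<Sum>A) + 1"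
  have gen: "generic A ?I x" using x by (simp add: generic_points_def)
  have "?e ` ?B \<subseteq> Rn n"
    using block_subset by (fastforce simp: Rn_def indicator_def)
  then have WR: "W \<subseteq> Rn n" unfolding W_def by (rule V.span_minimal[OF _ Rn_subspace])
  have dim: "V.dim W = card ?B"
    unfolding W_def using V.dim_span_eq_card_independent[OF independent_indicator_block[OF gen]]
    by (simp add: card_image[OF inj_on_indicator_block[OF gen]])
  have D: "\<forall>a\<in>A. a \<le> \<Sum>A" "0 \<le> \<Sum>A" using insert_zero_le_sum[OF fA A] by auto
  have "z \<in> {z \<in> Rn n. \<exists>y\<in>W. edist n z y \<le> r}" if z: "z \<in> cell n A (sign_type A ?I x)" for z
  proof -
    have type: "sign_type A ?I z = sign_type A ?I x" and gz: "generic A ?I z" and "z \<in> Rn n"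
      using z by (auto simp: cell_def generic_points_def)
    have "block A ?I z c = block A ?I x c" if "c \<in> ?B" for c
      using that block_eq_if_sign_type_eq[OF type] block_heads_subset by blast
    then have "(\<Sum>b\<in>block_heads A ?I z. fscale (z b) (indicator (block A ?I z b))) =
        (\<Sum>b\<in>?B. fscale (z b) (?e b))"
      unfolding block_heads_eq_if_sign_type_eq[OF type] by (intro sum.cong) auto
    then have "edist n z (\<Sum>b\<in>?B. fscale (z b) (?e b)) \<le> r"
      using edist_block_combination_le[OF D gz] unfolding r_def by simp
    moreover have "(\<Sum>b\<in>?B. fscale (z b) (?e b)) \<in> W"
      unfolding W_def by (intro V.span_sum V.span_scale V.span_base imageI)
    ultimately show ?thesis using \<open>z \<in> Rn n\<close> by blast
  qed
  moreover have "0 < r" unfolding r_def using D(2) by (intro add_nonneg_pos) auto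
  ultimately show ?thesis
    unfolding within_level_def using WR dim
    by (intro exI[of _ W] exI[of _ r]) (auto simp: W_def)
qed

lemma linear_indicator_above_head:
  assumes gen: "generic A I x" and fin: "finite I" and lin: "Vector_Spaces.linear fscale scaleR \<phi>"
    and h: "h \<in> block_heads A I x"
    and highest: "\<forall>c\<in>block_heads A I x. \<phi> (indicator (block A I x c)) \<noteq> (0 :: real) \<longrightarrow> x c \<le> x h"
  shows "\<phi> (indicator {k \<in> I. x h \<le> x k}) = \<phi> (indicator (block A I x h))"
proof -
  interpret L: Vector_Spaces.linear fscale "scaleR :: real \<Rightarrow> real \<Rightarrow> real" \<phi> by (rule lin)
  let ?B = "{c \<in> block_heads A I x. x h \<le> x c}"
  have "\<phi> (indicator (block A I x c)) = 0" if c: "c \<in> ?B - {h}" for c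
  proof -
    have "x c \<noteq> x h" using gen c h block_heads_subset[of A I x] unfolding generic_def by blast
    then show ?thesis using highest c by force
  qed
  then show ?thesis
    unfolding indicator_above_head_eq_sum[OF gen fin h] L.sum
    using sum.remove[of ?B h "\<lambda>c. \<phi> (indicator (block A I x c))"] h finite_block_heads[OF fin]
    by simp
qed

lemma ex_nonneg_abs_affine_gt:
  fixes p q M :: real
  assumes "q \<noteq> 0"
  shows "\<exists>t\<ge>0. M < \<bar>p + t * q\<bar>"
proof
  define t where "t = (\<bar>M\<bar> + \<bar>p\<bar> + 1) / \<bar>q\<bar>"
  have "t * \<bar>q\<bar> = \<bar>M\<bar> + \<bar>p\<bar> + 1" "0 \<le> t" unfolding t_def using assms by auto
  moreover have "t * \<bar>q\<bar> - \<bar>p\<bar> \<le> \<bar>p + t * q\<bar>" using \<open>0 \<le> t\<close> by (simp add: abs_mult)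
  ultimately show "0 \<le> t \<and> M < \<bar>p + t * q\<bar>" by linarith
qed

text \<open>If the cell were within bounded distance of a subspace \<open>W\<close> of smaller dimension, some
  block indicator would lie outside \<open>W\<close>; a functional vanishing on \<open>W\<close> then stays bounded on
  the cell, although it is unbounded along the direction in which the blocks from a suitable
  head upwards are lifted.\<close>

lemma card_block_heads_le_if_within_level:
  assumes A: "\<forall>a\<in>A. a > 0" and x: "x \<in> generic_points n A"
    and wl: "within_level n l (cell n A (sign_type A {..<n} x))"
  shows "card (block_heads A {..<n} x) \<le> l"
proof (rule ccontr)
  let ?I = "{..<n}" and ?B = "block_heads A {..<n} x"
  let ?e = "\<lambda>b. indicator (block A {..<n} x b) :: nat \<Rightarrow> real"
  assume "\<not> card ?B \<le> l"
  have gen: "generic A ?I x" using x by (simp add: generic_points_def)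
  obtain W r where W: "W \<subseteq> Rn n" "V.subspace W" "V.dim W = l"
    and cover: "cell n A (sign_type A ?I x) \<subseteq> {z \<in> Rn n. \<exists>y\<in>W. edist n z y \<le> r}"
    using wl unfolding within_level_def by blast
  have "\<not> ?e ` ?B \<subseteq> W"
    using card_independent_le_dim[OF W(1,2) _ independent_indicator_block[OF gen finite_lessThan]]
      card_image[OF inj_on_indicator_block[OF gen]] W(3) \<open>\<not> card ?B \<le> l\<close> by auto
  then obtain b where b: "b \<in> ?B" "?e b \<notin> W" by blast
  obtain \<phi> where lin: "Vector_Spaces.linear fscale scaleR \<phi>" and \<phi>W: "\<forall>w\<in>W. \<phi> w = 0"
    and "\<phi> (?e b) = (1 :: real)"
    using linear_functional_separating[OF W(2) b(2)] by blast
  interpret L: Vector_Spaces.linear fscale "scaleR :: real \<Rightarrow> real \<Rightarrow> real" \<phi> by (rule lin)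
  have "finite {c \<in> ?B. \<phi> (?e c) \<noteq> 0}" "{c \<in> ?B. \<phi> (?e c) \<noteq> 0} \<noteq> {}"
    using finite_block_heads[of ?I A x] b(1) \<open>\<phi> (?e b) = 1\<close> by auto
  then obtain h where "h \<in> {c \<in> ?B. \<phi> (?e c) \<noteq> 0}" "\<forall>c\<in>{c \<in> ?B. \<phi> (?e c) \<noteq> 0}. x c \<le> x h"
    using ex_highest by blast
  then have h: "h \<in> ?B" "\<phi> (?e h) \<noteq> 0" and highest: "\<forall>c\<in>?B. \<phi> (?e c) \<noteq> 0 \<longrightarrow> x c \<le> x h"
    by auto
  define u where "u = (indicator {k \<in> ?I. x h \<le> x k} :: nat \<Rightarrow> real)"
  have "\<phi> u \<noteq> 0"
    using linear_indicator_above_head[OF gen finite_lessThan lin h(1) highest] h(2) by (simp add: u_def)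
  define C where "C = (\<Sum>k<n. \<bar>\<phi> (indicator {k})\<bar>)"
  have bounded: "\<bar>\<phi> x + t * \<phi> u\<bar> \<le> C * r" if "0 \<le> t" for t
  proof -
    have "x + fscale t u \<in> cell n A (sign_type A ?I x)"
      using upper_shift_in_cell[OF A x h(1) that] by (simp add: u_def plus_fun_def fscale_def)
    then obtain y where y: "x + fscale t u \<in> Rn n" "y \<in> W" "edist n (x + fscale t u) y \<le> r"
      using cover by blast
    have "\<bar>\<phi> (x + fscale t u) - \<phi> y\<bar> \<le> C * edist n (x + fscale t u) y"
      unfolding C_def using linear_diff_le_edist[OF lin y(1)] y(2) W(1) by blast
    also have "\<dots> \<le> C * r" using y(3) by (simp add: C_def mult_left_mono sum_nonneg)
    finally show ?thesis using \<phi>W y(2) by (simp add: L.add L.scale)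
  qed
  then show False using ex_nonneg_abs_affine_gt[OF \<open>\<phi> u \<noteq> 0\<close>, of "C * r" "\<phi> x"] by force
qed

lemma level_cell:
  assumes "finite A" "\<forall>a\<in>A. a > 0" "x \<in> generic_points n A"
  shows "level n (cell n A (sign_type A {..<n} x)) = card (block_heads A {..<n} x)"
  unfolding level_def
  using within_level_card_block_heads[OF assms] card_block_heads_le_if_within_level[OF assms(2,3)]
  by (intro Least_equality) auto

section \<open>Counting regions by level\<close>

lemma obtain_generic_point:
  assumes "generic A {..<n} x"
  obtains y where "y \<in> generic_points n A" "sign_type A {..<n} y = sign_type A {..<n} x"
    "block_heads A {..<n} y = block_heads A {..<n} x"
proof
  let ?y = "\<lambda>k. if k < n then x k else 0"
  have agree: "\<forall>i\<in>{..<n}. ?y i = x i + 0" by simp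
  show "?y \<in> generic_points n A"
    using assms generic_translate[OF agree] by (simp add: generic_points_def Rn_def)
  show "sign_type A {..<n} ?y = sign_type A {..<n} x" by (rule sign_type_translate[OF agree])
  show "block_heads A {..<n} ?y = block_heads A {..<n} x" by (rule block_heads_translate[OF agree])
qed

lemma regions_of_level_eq:
  assumes "finite A" "\<forall>a\<in>A. a > 0"
  shows "{R \<in> regions_C n A. level n R = l} = cell n A ` types_of_level A l {..<n}"
proof
  show "{R \<in> regions_C n A. level n R = l} \<subseteq> cell n A ` types_of_level A l {..<n}"
    unfolding regions_C_eq_cells types_of_level_def
    using level_cell[OF assms] by (fastforce simp: generic_points_def)
  show "cell n A ` types_of_level A l {..<n} \<subseteq> {R \<in> regions_C n A. level n R = l}"
  proof
    fix R assume "R \<in> cell n A ` types_of_level A l {..<n}"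
    then obtain x where x: "R = cell n A (sign_type A {..<n} x)" "generic A {..<n} x"
      "card (block_heads A {..<n} x) = l"
      unfolding types_of_level_def by blast
    obtain y where y: "y \<in> generic_points n A" "sign_type A {..<n} y = sign_type A {..<n} x"
      "block_heads A {..<n} y = block_heads A {..<n} x"
      using obtain_generic_point[OF x(2)] by blast
    then have R: "R = cell n A (sign_type A {..<n} y)" using x(1) by simp
    then have "R \<in> regions_C n A" unfolding regions_C_eq_cells using y(1) by blast
    moreover have "level n R = l" using R level_cell[OF assms y(1)] y(3) x(3) by simp
    ultimately show "R \<in> {R \<in> regions_C n A. level n R = l}" by blast
  qed
qed

lemma inj_on_cell: "inj_on (cell n A) (types_of_level A l {..<n})"
proof (rule inj_onI)
  fix \<sigma> \<tau> assume "\<sigma> \<in> types_of_level A l {..<n}" "\<tau> \<in> types_of_level A l {..<n}"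
    and eq: "cell n A \<sigma> = cell n A \<tau>"
  then obtain x where x: "\<sigma> = sign_type A {..<n} x" "generic A {..<n} x"
    unfolding types_of_level_def by blast
  obtain y where "y \<in> generic_points n A" "sign_type A {..<n} y = \<sigma>"
    using obtain_generic_point[OF x(2)] x(1) by metis
  then have "y \<in> cell n A \<sigma>" by (simp add: cell_def)
  then have "y \<in> cell n A \<tau>" using eq by simp
  then show "\<sigma> = \<tau>" using \<open>sign_type A {..<n} y = \<sigma>\<close> by (simp add: cell_def)
qed

lemma r_level_eq_card_types_of_level:
  assumes "finite A" "\<forall>a\<in>A. a > 0"
  shows "r_level l n A = card (types_of_level A l {..<n})"
  unfolding r_level_def regions_of_level_eq[OF assms] by (rule card_image[OF inj_on_cell])

lemma egf_pow_if_binomial_convolution: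
  fixes N :: "nat \<Rightarrow> nat \<Rightarrow> nat"
  assumes N0: "\<And>n. N 0 n = (if n = 0 then 1 else 0)"
    and N: "\<And>l n. 1 \<le> l \<Longrightarrow> N l n = (\<Sum>k\<le>n. (n choose k) * (N 1 k * N (l - 1) (n - k)))"
  shows "Abs_fps (\<lambda>n. of_nat (N l n) / fact n :: 'a :: field_char_0) =
    Abs_fps (\<lambda>n. of_nat (N 1 n) / fact n) ^ l"
proof (induction l)
  case 0
  show ?case by (rule fps_ext) (simp add: N0)
next
  case (Suc l)
  have "fps_nth (Abs_fps (\<lambda>n. of_nat (N 1 n) / fact n) * Abs_fps (\<lambda>n. of_nat (N l n) / fact n)) n =
      (of_nat (N (Suc l) n) / fact n :: 'a)" for n
  proof -
    have "fps_nth (Abs_fps (\<lambda>n. of_nat (N 1 n) / fact n) * Abs_fps (\<lambda>n. of_nat (N l n) / fact n)) n =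
        (\<Sum>k\<le>n. of_nat (N 1 k) / fact k * (of_nat (N l (n - k)) / fact (n - k)) :: 'a)"
      by (simp add: fps_mult_nth atLeast0AtMost)
    also have "\<dots> = (\<Sum>k\<le>n. of_nat ((n choose k) * (N 1 k * N l (n - k))) / fact n)"
      by (intro sum.cong refl) (simp add: binomial_fact field_simps)
    also have "\<dots> = of_nat (N (Suc l) n) / fact n"
      by (simp add: N[of "Suc l" n] sum_divide_distrib[symmetric])
    finally show ?thesis .
  qed
  then show ?case using Suc.IH by (simp add: fps_ext mult.commute)
qed

theorem theorem1p2:
  fixes A :: "real set" and l :: nat
  assumes "finite A" and "\<forall>a\<in>A. a > 0"
  shows "F_gen l A = (F_gen 1 A) ^ l"
proof -
  define N where "N l n = card (types_of_level A l {..<n})" for l n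
  have F: "F_gen l A = Abs_fps (\<lambda>n. of_nat (N l n) / fact n)" for l
    unfolding F_gen_def N_def r_level_eq_card_types_of_level[OF assms] ..
  have "N 0 n = (if n = 0 then 1 else 0)" for n
    unfolding N_def by (simp add: types_of_level_0 lessThan_empty_iff)
  moreover have "N l n = (\<Sum>k\<le>n. (n choose k) * (N 1 k * N (l - 1) (n - k)))" if "1 \<le> l" for l n
    unfolding N_def by (rule card_types_of_level_lessThan_rec[OF assms that])
  ultimately show ?thesis unfolding F by (rule egf_pow_if_binomial_convolution)
qed
end
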